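(* Let $k\ge 1$ be an integer, $T=6k+1$, and $w=s_1\cdots s_T\in\Omega_T$. For any distinct $i,j,t\in\{1,2,3\}$, $2x_{ij}(w)+x_{it}(w)+x_{tj}(w)\ge x_{ji}(w)+2k-1$. If equality holds, then $s_T=i$.
   Context: $\Omega_T$ is the set of words $s_1\cdots s_T$ over $\{1,2,3\}$ with $s_l\ne s_{l+1}$ for all $l$; for $i\ne j$, $x_{ij}(w)$ is the number of $l\in\{1,\dots,T-1\}$ with $s_ls_{l+1}=ij$. *)

theory Defs
  imports Main
begin

text \<open>Words s_1 ... s_T are lists of length T (0-indexed: s_l = w ! (l-1)).\<close>

definition Omega :: "nat \<Rightarrow> nat list set" where
  "Omega T = {w. length w = T \<and> set w \<subseteq> {1,2,3} \<and>
                 (\<forall>l. Suc l < T \<longrightarrow> w ! l \<noteq> w ! Suc l)}"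

definition xcount :: "nat \<Rightarrow> nat \<Rightarrow> nat list \<Rightarrow> nat" where
  "xcount i j w = card {l. Suc l < length w \<and> w ! l = i \<and> w ! Suc l = j}"

end

theory Submission
  imports Defs
begin

text \<open>Give the letters i, t, j the heights 0, 2, 4. Across a single transition of a word over
  {i, j, t} without repeated letters, three times the change of 2 x_ij + x_it + x_tj - x_ji
  equals 1 plus the change in height plus 1 if the transition follows the cycle i, j, t.
  Summing over the T - 1 = 6k transitions, 3 (2 x_ij + x_it + x_tj - x_ji) is at least
  6k - 4 with the height bounded by 4, whence the bound; in the equality case the final
  height must be at most 1, so the word ends in i.\<close>

definition height :: "nat \<Rightarrow> nat \<Rightarrow> nat \<Rightarrow> int" where
  "height i t v = (if v = i then 0 else if v = t then 2 else 4)"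

lemma height_bounds: "0 \<le> height i t v" "height i t v \<le> 4"
  by (auto simp: height_def)

lemma height_le_1_imp: "height i t v \<le> 1 \<Longrightarrow> v = i"
  by (auto simp: height_def split: if_splits)

lemma xcount_eq_sum:
  "int (xcount i j w) = (\<Sum>l<length w - 1. of_bool (w ! l = i \<and> w ! Suc l = j))"
proof -
  have "{l. Suc l < length w \<and> w ! l = i \<and> w ! Suc l = j}
      = {..<length w - 1} \<inter> {l. w ! l = i \<and> w ! Suc l = j}"
    by auto
  then show ?thesis
    by (simp add: xcount_def)
qed

lemma transition_identity:
  fixes a b :: nat
  assumes "a \<in> {i,j,t}" "b \<in> {i,j,t}" "a \<noteq> b" "i \<noteq> j" "i \<noteq> t" "j \<noteq> t"
  shows "3 * (2 * of_bool (a = i \<and> b = j) + of_bool (a = i \<and> b = t)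
              + of_bool (a = t \<and> b = j) - of_bool (a = j \<and> b = i))
       = 1 + height i t b - height i t a
         + (of_bool (a = i \<and> b = j) + of_bool (a = j \<and> b = t) + of_bool (a = t \<and> b = i) :: int)"
  using assms by (auto simp: height_def)

lemma weighted_xcount_identity:
  assumes "w \<noteq> []" "set w \<subseteq> {i,j,t}" "i \<noteq> j" "i \<noteq> t" "j \<noteq> t"
    and adj: "\<forall>l. Suc l < length w \<longrightarrow> w ! l \<noteq> w ! Suc l"
  shows "3 * (2 * int (xcount i j w) + int (xcount i t w) + int (xcount t j w)
              - int (xcount j i w))
       = int (length w) - 1 + height i t (last w) - height i t (hd w)
         + int (xcount i j w + xcount j t w + xcount t i w)"
proof -
  define n where "n = length w - 1"
  have counts: "int (xcount a b w) = (\<Sum>l<n. of_bool (w ! l = a \<and> w ! Suc l = b))" for a b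
    unfolding n_def by (rule xcount_eq_sum)
  have step: "3 * (2 * of_bool (w ! l = i \<and> w ! Suc l = j) + of_bool (w ! l = i \<and> w ! Suc l = t)
              + of_bool (w ! l = t \<and> w ! Suc l = j) - of_bool (w ! l = j \<and> w ! Suc l = i))
       = 1 + (height i t (w ! Suc l) - height i t (w ! l))
         + (of_bool (w ! l = i \<and> w ! Suc l = j) + of_bool (w ! l = j \<and> w ! Suc l = t)
            + of_bool (w ! l = t \<and> w ! Suc l = i) :: int)"
    if "l < n" for l
  proof -
    have "Suc l < length w" "l < length w" using that unfolding n_def by simp_all
    then have "w ! l \<in> {i,j,t}" "w ! Suc l \<in> {i,j,t}" "w ! l \<noteq> w ! Suc l"
      using assms(2) adj nth_mem by blast+
    with assms(3-5) show ?thesis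
      using transition_identity by simp
  qed
  have telescope: "(\<Sum>l<n. height i t (w ! Suc l) - height i t (w ! l))
      = height i t (last w) - height i t (hd w)"
  proof -
    have "(\<Sum>l<n. height i t (w ! Suc l) - height i t (w ! l))
        = height i t (w ! n) - height i t (w ! 0)"
      by (rule sum_lessThan_telescope)
    with assms(1) show ?thesis
      by (simp add: n_def last_conv_nth hd_conv_nth)
  qed
  have "3 * (2 * int (xcount i j w) + int (xcount i t w) + int (xcount t j w)
              - int (xcount j i w))
      = (\<Sum>l<n. 3 * (2 * of_bool (w ! l = i \<and> w ! Suc l = j)
              + of_bool (w ! l = i \<and> w ! Suc l = t) + of_bool (w ! l = t \<and> w ! Suc l = j)
              - of_bool (w ! l = j \<and> w ! Suc l = i)))"
    by (simp add: counts sum_subtractf sum.distrib sum_distrib_left)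
  also have "\<dots> = (\<Sum>l<n. 1 + (height i t (w ! Suc l) - height i t (w ! l))
         + (of_bool (w ! l = i \<and> w ! Suc l = j) + of_bool (w ! l = j \<and> w ! Suc l = t)
            + of_bool (w ! l = t \<and> w ! Suc l = i)))"
    using step by (intro sum.cong) simp_all
  also have "\<dots> = int n + height i t (last w) - height i t (hd w)
         + int (xcount i j w + xcount j t w + xcount t i w)"
    by (simp add: sum.distrib telescope counts)
  moreover have "int n = int (length w) - 1"
    using assms(1) by (simp add: n_def of_nat_diff Suc_le_eq)
  ultimately show ?thesis
    by simp
qed

theorem lemma7:
  fixes k T :: nat and w :: "nat list" and i j t :: nat
  assumes "k \<ge> 1" and "T = 6 * k + 1" and "w \<in> Omega T"
    and "i \<in> {1,2,3}" and "j \<in> {1,2,3}" and "t \<in> {1,2,3}"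
    and "i \<noteq> j" and "i \<noteq> t" and "j \<noteq> t"
  shows "int (2 * xcount i j w + xcount i t w + xcount t j w)
           \<ge> int (xcount j i w) + 2 * int k - 1 \<and>
         (int (2 * xcount i j w + xcount i t w + xcount t j w)
           = int (xcount j i w) + 2 * int k - 1 \<longrightarrow> last w = i)"
proof -
  have letters: "{1,2,3} = {i,j,t}"
    using assms(4-9) by auto
  have len: "length w = 6 * k + 1" and word: "set w \<subseteq> {i,j,t}"
    and adj: "\<forall>l. Suc l < length w \<longrightarrow> w ! l \<noteq> w ! Suc l"
    using assms(2,3) letters by (auto simp: Omega_def)
  define A where "A = 2 * int (xcount i j w) + int (xcount i t w) + int (xcount t j w)
                      - int (xcount j i w)"
  have "w \<noteq> []"
    using len by auto
  have "3 * A = 6 * int k + height i t (last w) - height i t (hd w)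
                + int (xcount i j w + xcount j t w + xcount t i w)"
    using weighted_xcount_identity[OF \<open>w \<noteq> []\<close> word assms(7-9) adj] len unfolding A_def by auto
  then have "A \<ge> 2 * int k - 1" and "A = 2 * int k - 1 \<Longrightarrow> last w = i"
    using height_bounds[of i t "last w"] height_bounds[of i t "hd w"]
      height_le_1_imp[of i t "last w"] by linarith+
  then show ?thesis
    unfolding A_def by simp
qed

end
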